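(* Let $\mathcal{C}$ be a finite set of medical codes, let $n_v\ge 1$, and let $R$ be a positive integer. Consider a windowed linear model specified by finitely many window lengths $t_1,\dots,t_m\in\{0,1,\dots,R-1\}\cup\{\infty\}$ and real weights $w_{\ell,c}$ ($1\le \ell\le m$, $c\in\mathcal{C}$), with output $$g(x)=\sigma\Big(\sum_{\ell=1}^m\sum_{c\in\mathcal{C}} w_{\ell,c}\,\xi_{\ell,c}(x)\Big),$$ where $\xi_{\ell,c}(x)=1$ if some visit $j$ of the history $x$ satisfies $c\in C_j$ and $T_A-t_j\le t_\ell$ (the condition on time being vacuous if $t_\ell=\infty$), and $\xi_{\ell,c}(x)=0$ otherwise. Then for every $\varepsilon>0$ there exist an embedding dimension $d_e$, a number of kernels $K$, a frequency vector $\omega\in\mathbb{R}^{d_e/2}$, and parameters of a SARD model (as defined in the context, with any number $L\ge 1$ of self-attention layers) whose output $f$ satisfies $|f(x)-g(x)|<\varepsilon$ for every patient history $x$ with at most $n_v$ visits.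
   Context: A patient history $x$ consists of $n\le n_v$ visits; visit $j$ has an integer time $t_j$ (in days) with $t_j\le T_A$, where $T_A$ is the fixed prediction date, and a set of codes $C_j\subseteq\mathcal{C}$. $\sigma$ denotes the logistic sigmoid $\sigma(z)=1/(1+e^{-z})$. SARD model: it has parameters consisting of a code embedding $\phi:\mathcal{C}\to\mathbb{R}^{d_e}$ ($d_e$ even), self-attention parameters, kernels $\kappa_1,\dots,\kappa_K\in\mathbb{R}^{d_e}$ and weights $u_1,\dots,u_K\in\mathbb{R}$; the frequency vector $\omega\in\mathbb{R}^{d_e/2}$ is fixed. For each visit $j$, the content embedding is $\psi_j=\sum_{c\in C_j}\phi(c)$ and the temporal embedding is $\tau_j=\sin(\tilde t_j\omega)\,\|\,\cos(\tilde t_j\omega)\in\mathbb{R}^{d_e}$, where $\tilde t_j=\min(R,\,T_A-t_j)$, $\|$ denotes concatenation, and $\sin,\cos$ act elementwise. The initial representation is $h^0_j=\psi_j+\tau_j$. Each of $L$ self-attention layers maps $(h^{l-1}_j)_j$ to $(h^{l}_j)_j$ as follows: each of $H$ heads applies affine maps to obtain $k_j,q_j,v_j$, forms weights $a_{jr}=\exp(q_j\cdot k_r/\sqrt{d_e})/\sum_{s=1}^{n}\exp(q_j\cdot k_s/\sqrt{d_e})$ over the $n$ actual (non-padding) visits, and outputs $\sum_{r}a_{jr}v_r$; the heads' outputs are concatenated and passed through an affine map to $\mathbb{R}^{d_e}$, which is added to $h^{l-1}_j$ (residual connection). Write $\tilde\psi_j=h^L_j$. The convolutional prediction head computes $\chi_k=\max_{1\le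 j\le n}\langle\kappa_k,\tilde\psi_j\rangle$ for $k=1,\dots,K$ and outputs $f(x)=\sigma\big(\sum_{k=1}^K u_k\,\sigma(\chi_k)\big)$. All affine maps, $\phi$, $\kappa_k$, $u_k$ are free parameters. *)

theory Defs
  imports Complex_Main
begin

text \<open>Vectors in R^d are represented as functions nat => real; only the
  entries with index < d are meaningful (all sums below are bounded by d).\<close>
type_synonym vec = "nat \<Rightarrow> real"

text \<open>An affine map R^din -> R^dout: a matrix M (row i, column j) and a bias b.\<close>
type_synonym aff = "(nat \<Rightarrow> nat \<Rightarrow> real) \<times> vec"

definition sigmoid :: "real \<Rightarrow> real" where
  "sigmoid z = 1 / (1 + exp (- z))"

definition aff_app :: "nat \<Rightarrow> aff \<Rightarrow> vec \<Rightarrow> vec" where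
  "aff_app din A x = (\<lambda>i. snd A i + (\<Sum>j<din. fst A i j * x j))"

definition dotp :: "nat \<Rightarrow> vec \<Rightarrow> vec \<Rightarrow> real" where
  "dotp d x y = (\<Sum>i<d. x i * y i)"

text \<open>A patient history: list of visits (t_j, C_j), times in days (integers).\<close>
type_synonym 'c history = "(int \<times> 'c set) list"

definition temb :: "nat \<Rightarrow> vec \<Rightarrow> real \<Rightarrow> vec" where
  "temb de \<omega> t = (\<lambda>i. if i < de div 2 then sin (t * \<omega> i) else cos (t * \<omega> (i - de div 2)))"

definition attn_head :: "nat \<Rightarrow> nat \<Rightarrow> aff \<times> aff \<times> aff \<Rightarrow> vec list \<Rightarrow> vec list" where
  "attn_head de dk hp hs =
     (let Q = fst hp; K = fst (snd hp); V = snd (snd hp);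
          qs = map (aff_app de Q) hs; ks = map (aff_app de K) hs; vs = map (aff_app de V) hs
      in map (\<lambda>q. (let ws = map (\<lambda>k. exp (dotp dk q k / sqrt (real de))) ks
                   in (\<lambda>i. (\<Sum>r<length hs. (ws ! r / sum_list ws) * (vs ! r) i)))) qs)"

text \<open>One self-attention layer: list of heads and output affine map
  R^(H*dv) -> R^de applied to the concatenation of the head outputs, plus residual.\<close>
type_synonym layer = "(aff \<times> aff \<times> aff) list \<times> aff"

definition layer_app :: "nat \<Rightarrow> nat \<Rightarrow> nat \<Rightarrow> layer \<Rightarrow> vec list \<Rightarrow> vec list" where
  "layer_app de dk dv lay hs =
     (let heads = fst lay; Wo = snd lay;
          outs = map (\<lambda>hp. attn_head de dk hp hs) heads
      in map (\<lambda>j. (let c = (\<lambda>i. ((outs ! (i div dv)) ! j) (i mod dv))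
                  in (\<lambda>i. (hs ! j) i + aff_app (length heads * dv) Wo c i)))
             [0..<length hs])"

definition sard :: "nat \<Rightarrow> int \<Rightarrow> nat \<Rightarrow> nat \<Rightarrow> nat \<Rightarrow> vec \<Rightarrow> ('c \<Rightarrow> vec) \<Rightarrow> layer list
                    \<Rightarrow> nat \<Rightarrow> (nat \<Rightarrow> vec) \<Rightarrow> (nat \<Rightarrow> real) \<Rightarrow> 'c history \<Rightarrow> real" where
  "sard R TA de dk dv \<omega> \<phi> layers K \<kappa> u x =
     (let h0 = map (\<lambda>(t, C). (\<lambda>i. (\<Sum>c\<in>C. \<phi> c i)
                                  + temb de \<omega> (real_of_int (min (int R) (TA - t))) i)) x;
          hL = foldl (\<lambda>h lay. layer_app de dk dv lay h) h0 layers;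
          \<chi> = (\<lambda>k. Max ((\<lambda>h. dotp de (\<kappa> k) h) ` set hL))
      in sigmoid (\<Sum>k<K. u k * sigmoid (\<chi> k)))"

text \<open>Windowed linear model. A window length is "nat option", None meaning infinity.\<close>
definition xi :: "int \<Rightarrow> nat option \<Rightarrow> 'c \<Rightarrow> 'c history \<Rightarrow> real" where
  "xi TA w c x = (if (\<exists>(t, C)\<in>set x. c \<in> C \<and> (case w of None \<Rightarrow> True | Some wl \<Rightarrow> TA - t \<le> int wl))
                  then 1 else 0)"

definition windowed :: "'c set \<Rightarrow> int \<Rightarrow> nat option list \<Rightarrow> (nat \<Rightarrow> 'c \<Rightarrow> real) \<Rightarrow> 'c history \<Rightarrow> real" where
  "windowed Cs TA ws W x = sigmoid (\<Sum>l<length ws. \<Sum>c\<in>Cs. W l c * xi TA (ws ! l) c x)"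

end

theory Submission
  imports Defs
begin

text \<open>Give every layer a zero output map: the residual connections then make all layers the
  identity. Embed each visit by a one-hot code part plus the clock reading
  \<open>cos (min R (T_A - t) / R)\<close>, which is strictly decreasing in the integer elapsed time on
  \<open>[0, R]\<close>. For each pair of a window and a code, one kernel scores a visit at least \<open>N\<close> if the
  visit contains the code inside the window and at most \<open>-N\<close> otherwise; max-pooling keeps this
  separation for the whole history, so \<open>\<sigma>(\<chi>)\<close> lies within \<open>\<sigma>(-N)\<close> of the feature \<open>\<xi>\<close>. As \<open>\<sigma>\<close> is
  1-Lipschitz, the two outputs differ by at most \<open>\<Sum>|w| \<sigma>(-N)\<close>, which is small for large \<open>N\<close>.\<close>

lemma sigmoid_mono: "x \<le> y \<Longrightarrow> sigmoid x \<le> sigmoid y"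
  unfolding sigmoid_def by (simp add: frac_le add_pos_pos)

lemma sigmoid_pos: "0 < sigmoid x"
  unfolding sigmoid_def by (simp add: add_pos_pos)

lemma sigmoid_less_one: "sigmoid x < 1"
  unfolding sigmoid_def by (simp add: add_pos_pos)

lemma one_minus_sigmoid: "1 - sigmoid x = sigmoid (- x)"
proof -
  have "1 + exp x \<noteq> 0"
    by (smt (verit) exp_gt_zero)
  then show ?thesis
    unfolding sigmoid_def by (simp add: exp_minus field_simps)
qed

lemma sigmoid_neg_le: "0 \<le> N \<Longrightarrow> sigmoid (- N) \<le> 1 / (1 + N)"
proof -
  assume "0 \<le> N"
  moreover have "N \<le> exp N"
    using exp_ge_add_one_self[of N] by linarith
  ultimately show ?thesis
    unfolding sigmoid_def by (intro frac_le) simp_all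
qed

lemma sigmoid_has_derivative: "(sigmoid has_real_derivative exp (- x) / (1 + exp (- x))\<^sup>2) (at x)"
proof -
  have "1 + exp (- x) \<noteq> 0"
    by (smt (verit) exp_gt_zero)
  then show ?thesis
    unfolding sigmoid_def by (auto intro!: derivative_eq_intros simp: power2_eq_square)
qed

lemma abs_sigmoid_diff_le: "\<bar>sigmoid x - sigmoid y\<bar> \<le> \<bar>x - y\<bar>"
proof -
  have "\<bar>sigmoid b - sigmoid a\<bar> \<le> b - a" if "a < b" for a b
  proof -
    obtain z where z: "sigmoid b - sigmoid a = (b - a) * (exp (- z) / (1 + exp (- z))\<^sup>2)"
      using MVT2[OF \<open>a < b\<close>, of sigmoid "\<lambda>z. exp (- z) / (1 + exp (- z))\<^sup>2"]
        sigmoid_has_derivative by blast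
    have "exp (- z) \<le> (1 + exp (- z))\<^sup>2"
      by (simp add: power2_eq_square algebra_simps)
    then have "exp (- z) / (1 + exp (- z))\<^sup>2 \<le> 1"
      by (simp add: divide_le_eq_1)
    then show ?thesis
      unfolding z using \<open>a < b\<close> by (simp add: abs_mult mult_left_le del: times_divide_eq_right)
  qed
  from this[of x y] this[of y x] show ?thesis
    by (cases x y rule: linorder_cases) (auto simp: abs_minus_commute)
qed

lemma ex_sigmoid_neg_small:
  fixes A \<epsilon> :: real
  assumes "0 \<le> A" and "0 < \<epsilon>"
  obtains N where "0 \<le> N" and "A * sigmoid (- N) < \<epsilon>"
proof
  let ?N = "A / \<epsilon>"
  show "0 \<le> ?N"
    using assms by simp
  have "A * sigmoid (- ?N) \<le> A * (1 / (1 + ?N))"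
    using assms sigmoid_neg_le[of ?N] by (intro mult_left_mono) auto
  also have "\<dots> < \<epsilon>"
    using assms by (simp add: field_simps)
  finally show "A * sigmoid (- ?N) < \<epsilon>" .
qed

lemma abs_sigmoid_sub_indicator_le:
  assumes "if P then N \<le> s else s \<le> - N"
  shows "\<bar>sigmoid s - (if P then 1 else 0)\<bar> \<le> sigmoid (- N)"
proof (cases P)
  case True
  then have "sigmoid N \<le> sigmoid s"
    using assms by (simp add: sigmoid_mono)
  then show ?thesis
    using True sigmoid_less_one[of s] one_minus_sigmoid[of N] by simp
next
  case False
  then show ?thesis
    using assms sigmoid_pos[of s] sigmoid_mono[of s "- N"] by simp
qed

lemma sigmoid_weighted_sum_approx:
  fixes w s :: "'i \<Rightarrow> real"
  assumes "finite I" and sep: "\<And>i. i \<in> I \<Longrightarrow> if P i then N \<le> s i else s i \<le> - N"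
  shows "\<bar>sigmoid (\<Sum>i\<in>I. w i * sigmoid (s i)) - sigmoid (\<Sum>i\<in>I. w i * (if P i then 1 else 0))\<bar>
           \<le> (\<Sum>i\<in>I. \<bar>w i\<bar>) * sigmoid (- N)"
proof -
  have "\<bar>sigmoid (\<Sum>i\<in>I. w i * sigmoid (s i)) - sigmoid (\<Sum>i\<in>I. w i * (if P i then 1 else 0))\<bar>
          \<le> \<bar>(\<Sum>i\<in>I. w i * sigmoid (s i)) - (\<Sum>i\<in>I. w i * (if P i then 1 else 0))\<bar>"
    by (rule abs_sigmoid_diff_le)
  also have "\<dots> = \<bar>\<Sum>i\<in>I. w i * (sigmoid (s i) - (if P i then 1 else 0))\<bar>"
    by (simp add: sum_subtractf right_diff_distrib)
  also have "\<dots> \<le> (\<Sum>i\<in>I. \<bar>w i\<bar> * \<bar>sigmoid (s i) - (if P i then 1 else 0)\<bar>)"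
    by (rule order_trans[OF sum_abs]) (simp add: abs_mult)
  also have "\<dots> \<le> (\<Sum>i\<in>I. \<bar>w i\<bar> * sigmoid (- N))"
    using sep by (intro sum_mono mult_left_mono abs_sigmoid_sub_indicator_le) auto
  finally show ?thesis
    by (simp add: sum_distrib_right)
qed

lemma Max_image_separated:
  fixes f :: "'a \<Rightarrow> real"
  assumes "finite A" and "A \<noteq> {}"
    and sep: "\<And>a. a \<in> A \<Longrightarrow> if P a then N \<le> f a else f a \<le> - N"
  shows "if \<exists>a\<in>A. P a then N \<le> Max (f ` A) else Max (f ` A) \<le> - N"
proof (cases "\<exists>a\<in>A. P a")
  case True
  then obtain a where "a \<in> A" "P a" by blast
  then have "N \<le> f a"
    using sep by fastforce
  also have "f a \<le> Max (f ` A)"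
    using \<open>a \<in> A\<close> assms(1) by simp
  finally show ?thesis
    using True by simp
next
  case False
  then show ?thesis
    using assms by (simp add: Max_le_iff)
qed

definition zero_aff :: aff where
  "zero_aff = (\<lambda>_ _. 0, \<lambda>_. 0)"

lemma layer_app_zero_out: "layer_app de dk dv (heads, zero_aff) hs = hs"
  unfolding layer_app_def aff_app_def zero_aff_def Let_def by (simp add: map_nth)

lemma foldl_layer_app_zero_out:
  assumes "\<forall>lay\<in>set layers. snd lay = zero_aff"
  shows "foldl (\<lambda>h lay. layer_app de dk dv lay h) hs layers = hs"
  using assms
proof (induction layers)
  case (Cons lay layers)
  then show ?case
    using layer_app_zero_out[of de dk dv "fst lay"] by (cases lay) simp
qed simp

definition in_window :: "nat option \<Rightarrow> int \<Rightarrow> bool" where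
  "in_window w d = (case w of None \<Rightarrow> True | Some wl \<Rightarrow> d \<le> int wl)"

definition window_thr :: "nat \<Rightarrow> nat option \<Rightarrow> real" where
  "window_thr R w = (case w of None \<Rightarrow> 1 | Some wl \<Rightarrow> cos (real wl / real R))"

definition window_slope :: "real \<Rightarrow> nat \<Rightarrow> nat option \<Rightarrow> real" where
  "window_slope N R w = (case w of None \<Rightarrow> 0
     | Some wl \<Rightarrow> 2 * N / (cos (real wl / real R) - cos (real (wl + 1) / real R)))"

lemma cos_window_mono:
  assumes "0 \<le> x" "x \<le> y" "y \<le> real R" "0 < R"
  shows "cos (y / real R) \<le> cos (x / real R)"
proof -
  have "y / real R \<le> 1"
    using assms by simp
  then have "y / real R \<le> pi"
    using pi_ge_two by linarith
  then show ?thesis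
    using assms by (intro cos_monotone_0_pi_le) (auto simp: divide_right_mono)
qed

lemma cos_window_gap_pos:
  assumes "wl < R"
  shows "cos (real (wl + 1) / real R) < cos (real wl / real R)"
proof -
  have "real (wl + 1) / real R \<le> 1"
    using assms by simp
  then have "real (wl + 1) / real R \<le> pi"
    using pi_ge_two by linarith
  then show ?thesis
    using assms by (intro cos_monotone_0_pi) (auto simp: divide_strict_right_mono)
qed

lemma window_slope_nonneg:
  assumes "case w of None \<Rightarrow> True | Some wl \<Rightarrow> wl < R" and "0 \<le> N"
  shows "0 \<le> window_slope N R w"
proof (cases w)
  case (Some wl)
  then show ?thesis
    using assms cos_window_gap_pos[of wl R] unfolding window_slope_def by simp
qed (simp add: window_slope_def)

text \<open>The clock reading \<open>cos (min R d / R)\<close> is decreasing in the elapsed time \<open>d\<close>; since \<open>d\<close> is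
  an integer, a window of length \<open>wl\<close> is cut out by a threshold between the readings at
  \<open>wl\<close> and \<open>wl + 1\<close>, and the slope rescales that gap to \<open>2 N\<close>.\<close>
lemma window_term_separated:
  assumes w: "case w of None \<Rightarrow> True | Some wl \<Rightarrow> wl < R" and "0 \<le> N" and "0 \<le> d"
  defines "T \<equiv> window_slope N R w * (cos (real_of_int (min (int R) d) / real R) - window_thr R w)"
  shows "if in_window w d then 0 \<le> T else T \<le> - 2 * N"
proof (cases w)
  case None
  then show ?thesis
    unfolding T_def in_window_def window_slope_def by simp
next
  case (Some wl)
  define s where "s = real_of_int (min (int R) d)"
  define gap where "gap = cos (real wl / real R) - cos (real (wl + 1) / real R)"
  have "wl < R" "0 \<le> s" "s \<le> real R"
    using w Some \<open>0 \<le> d\<close> unfolding s_def by auto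
  have "0 < gap"
    using cos_window_gap_pos[OF \<open>wl < R\<close>] unfolding gap_def by simp
  have T: "T = 2 * N * (cos (s / real R) - cos (real wl / real R)) / gap"
    unfolding T_def window_slope_def window_thr_def Some s_def gap_def by simp
  show ?thesis
  proof (cases "d \<le> int wl")
    case True
    then have "cos (real wl / real R) \<le> cos (s / real R)"
      using \<open>0 \<le> s\<close> \<open>wl < R\<close> unfolding s_def by (intro cos_window_mono) auto
    then show ?thesis
      using True \<open>0 \<le> N\<close> \<open>0 < gap\<close> unfolding T in_window_def Some by simp
  next
    case False
    then have "cos (s / real R) \<le> cos (real (wl + 1) / real R)"
      using \<open>s \<le> real R\<close> \<open>wl < R\<close> unfolding s_def by (intro cos_window_mono) auto
    then have "2 * N * (cos (s / real R) - cos (real wl / real R)) \<le> 2 * N * (- gap)"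
      using \<open>0 \<le> N\<close> unfolding gap_def by (intro mult_left_mono) auto
    then show ?thesis
      using False \<open>0 < gap\<close> unfolding T in_window_def Some by (simp add: divide_le_eq)
  qed
qed

text \<open>Layout of a visit vector in dimension \<open>2 (m + 2)\<close>: the sine half vanishes except at
  coordinate 1, so codes are placed one-hot at \<open>idx c + 2 < m + 2\<close>; in the cosine half,
  coordinate \<open>m + 2\<close> is the constant \<open>cos 0 = 1\<close> and coordinate \<open>m + 3\<close> is the clock reading.\<close>
definition code_vec :: "('c \<Rightarrow> nat) \<Rightarrow> 'c \<Rightarrow> vec" where
  "code_vec idx c = (\<lambda>i. if i = idx c + 2 then 1 else 0)"

definition clock_freq :: "nat \<Rightarrow> vec" where
  "clock_freq R = (\<lambda>i. if i = 1 then 1 / real R else 0)"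

definition window_kernel :: "('c \<Rightarrow> nat) \<Rightarrow> nat \<Rightarrow> real \<Rightarrow> nat \<Rightarrow> nat option \<Rightarrow> 'c \<Rightarrow> vec" where
  "window_kernel idx m N R w c =
     (let sl = window_slope N R w; p = window_thr R w
      in (\<lambda>i. (if i = idx c + 2 then 2 * N + sl * (1 - p) else 0)
             + (if i = m + 2 then - sl - N else 0) + (if i = m + 3 then sl else 0)))"

lemma visit_vec_coords:
  fixes s :: real and R :: nat
  assumes "finite Cs" "inj_on idx Cs" "\<forall>c\<in>Cs. idx c < m" "C \<subseteq> Cs"
  defines "h \<equiv> \<lambda>i. (\<Sum>c\<in>C. code_vec idx c i) + temb (2 * (m + 2)) (clock_freq R) s i"
  shows "c \<in> Cs \<Longrightarrow> h (idx c + 2) = (if c \<in> C then 1 else 0)"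
    and "h (m + 2) = 1"
    and "h (m + 3) = cos (s / real R)"
proof -
  have "finite C"
    using assms(1,4) finite_subset by blast
  have no_code: "(\<Sum>c\<in>C. code_vec idx c i) = 0" if "m + 2 \<le> i" for i
    using assms(3,4) that unfolding code_vec_def by (intro sum.neutral) fastforce
  show "h (m + 2) = 1" "h (m + 3) = cos (s / real R)"
    using no_code[of "m + 2"] no_code[of "m + 3"]
    unfolding h_def temb_def clock_freq_def by simp_all
  assume "c \<in> Cs"
  have "(\<Sum>c'\<in>C. code_vec idx c' (idx c + 2)) = (\<Sum>c'\<in>C. if c' = c then 1 else 0)"
    using assms(2,4) \<open>c \<in> Cs\<close> unfolding code_vec_def
    by (intro sum.cong) (auto dest: inj_onD)
  then show "h (idx c + 2) = (if c \<in> C then 1 else 0)"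
    using \<open>finite C\<close> assms(3) \<open>c \<in> Cs\<close> unfolding h_def temb_def clock_freq_def by simp
qed

lemma dotp_window_kernel:
  assumes "idx c < m"
  shows "dotp (2 * (m + 2)) (window_kernel idx m N R w c) h
           = (2 * N + window_slope N R w * (1 - window_thr R w)) * h (idx c + 2)
             + (- window_slope N R w - N) * h (m + 2) + window_slope N R w * h (m + 3)"
proof -
  let ?d = "2 * (m + 2)"
  have "dotp ?d (window_kernel idx m N R w c) h
          = (\<Sum>i<?d. if i = idx c + 2 then (2 * N + window_slope N R w * (1 - window_thr R w)) * h i else 0)
            + (\<Sum>i<?d. if i = m + 2 then (- window_slope N R w - N) * h i else 0)
            + (\<Sum>i<?d. if i = m + 3 then window_slope N R w * h i else 0)"
    unfolding dotp_def window_kernel_def Let_def sum.distrib[symmetric]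
    using assms by (intro sum.cong) auto
  moreover have "idx c + 2 < ?d" "m + 2 < ?d" "m + 3 < ?d"
    using assms by simp_all
  ultimately show ?thesis
    by (simp only: sum.delta finite_lessThan lessThan_iff if_True)
qed

lemma window_kernel_score_separated:
  fixes d :: int and R :: nat
  assumes "finite Cs" "inj_on idx Cs" "\<forall>c\<in>Cs. idx c < m" "C \<subseteq> Cs" "c \<in> Cs"
    and w: "case w of None \<Rightarrow> True | Some wl \<Rightarrow> wl < R" and "0 \<le> N" and "0 \<le> d"
  defines "h \<equiv> \<lambda>i. (\<Sum>c\<in>C. code_vec idx c i)
                     + temb (2 * (m + 2)) (clock_freq R) (real_of_int (min (int R) d)) i"
  shows "if c \<in> C \<and> in_window w d then N \<le> dotp (2 * (m + 2)) (window_kernel idx m N R w c) h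
         else dotp (2 * (m + 2)) (window_kernel idx m N R w c) h \<le> - N"
proof -
  let ?sl = "window_slope N R w" and ?T = "cos (real_of_int (min (int R) d) / real R)"
  have "idx c < m"
    using assms(3,5) by blast
  have score: "dotp (2 * (m + 2)) (window_kernel idx m N R w c) h
                 = (if c \<in> C then N + ?sl * (?T - window_thr R w) else - N + ?sl * (?T - 1))"
    using visit_vec_coords[OF assms(1-4)] assms(3,5)
    unfolding dotp_window_kernel[where idx = idx and c = c, OF \<open>idx c < m\<close>] h_def
    by (simp add: algebra_simps)
  have "?sl * (?T - 1) \<le> 0"
    using window_slope_nonneg[OF w \<open>0 \<le> N\<close>] by (simp add: mult_nonneg_nonpos)
  then show ?thesis
    using window_term_separated[OF w \<open>0 \<le> N\<close> \<open>0 \<le> d\<close>] unfolding score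
    by (auto split: if_splits)
qed

lemma sard_window_model_error:
  fixes W :: "nat \<Rightarrow> 'c \<Rightarrow> real" and x :: "'c history"
  assumes "finite Cs" and "inj_on idx Cs" and "\<forall>c\<in>Cs. idx c < m"
    and kk: "bij_betw kk {..<K} ({..<length ws} \<times> Cs)"
    and ws: "\<forall>w\<in>set ws. case w of None \<Rightarrow> True | Some wl \<Rightarrow> wl < R"
    and "0 \<le> N" and layers: "\<forall>lay\<in>set layers. snd lay = zero_aff"
    and "x \<noteq> []" and x: "\<forall>(t, C)\<in>set x. t \<le> TA \<and> C \<subseteq> Cs"
  shows "\<bar>sard R TA (2 * (m + 2)) dk dv (clock_freq R) (code_vec idx) layers K
            (\<lambda>k. window_kernel idx m N R (ws ! fst (kk k)) (snd (kk k)))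
            (\<lambda>k. W (fst (kk k)) (snd (kk k))) x
          - windowed Cs TA ws W x\<bar>
         \<le> (\<Sum>l<length ws. \<Sum>c\<in>Cs. \<bar>W l c\<bar>) * sigmoid (- N)"
proof -
  let ?I = "{..<length ws} \<times> Cs" and ?de = "2 * (m + 2)"
  define visit :: "int \<times> 'c set \<Rightarrow> vec" where
    "visit = (\<lambda>(t, C) i. (\<Sum>c\<in>C. code_vec idx c i)
                         + temb ?de (clock_freq R) (real_of_int (min (int R) (TA - t))) i)"
  define score where
    "score p = Max ((\<lambda>v. dotp ?de (window_kernel idx m N R (ws ! fst p) (snd p)) (visit v)) ` set x)"
    for p :: "nat \<times> 'c"
  define P where
    "P p = (\<exists>v\<in>set x. snd p \<in> snd v \<and> in_window (ws ! fst p) (TA - fst v))" for p :: "nat \<times> 'c"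
  have "sard R TA ?de dk dv (clock_freq R) (code_vec idx) layers K
          (\<lambda>k. window_kernel idx m N R (ws ! fst (kk k)) (snd (kk k)))
          (\<lambda>k. W (fst (kk k)) (snd (kk k))) x
        = sigmoid (\<Sum>k<K. W (fst (kk k)) (snd (kk k)) * sigmoid (score (kk k)))"
    unfolding sard_def Let_def foldl_layer_app_zero_out[OF layers] score_def visit_def
    by (simp add: image_image case_prod_beta)
  also have "\<dots> = sigmoid (\<Sum>p\<in>?I. W (fst p) (snd p) * sigmoid (score p))"
    using sum.reindex_bij_betw[OF kk, of "\<lambda>p. W (fst p) (snd p) * sigmoid (score p)"] by simp
  finally have sard_eq: "sard R TA ?de dk dv (clock_freq R) (code_vec idx) layers K
          (\<lambda>k. window_kernel idx m N R (ws ! fst (kk k)) (snd (kk k)))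
          (\<lambda>k. W (fst (kk k)) (snd (kk k))) x
        = sigmoid (\<Sum>p\<in>?I. W (fst p) (snd p) * sigmoid (score p))" .
  have windowed_eq: "windowed Cs TA ws W x = sigmoid (\<Sum>p\<in>?I. W (fst p) (snd p) * (if P p then 1 else 0))"
    unfolding windowed_def xi_def P_def in_window_def sum.cartesian_product by (simp add: case_prod_beta)
  have sep: "if P p then N \<le> score p else score p \<le> - N" if "p \<in> ?I" for p
  proof -
    have "ws ! fst p \<in> set ws"
      using that by auto
    then have w: "case ws ! fst p of None \<Rightarrow> True | Some wl \<Rightarrow> wl < R"
      using ws by blast
    show ?thesis
      unfolding score_def P_def
    proof (rule Max_image_separated)
      fix v assume "v \<in> set x"
      then show "if snd p \<in> snd v \<and> in_window (ws ! fst p) (TA - fst v)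
                 then N \<le> dotp ?de (window_kernel idx m N R (ws ! fst p) (snd p)) (visit v)
                 else dotp ?de (window_kernel idx m N R (ws ! fst p) (snd p)) (visit v) \<le> - N"
        using window_kernel_score_separated[OF assms(1-3) _ _ w \<open>0 \<le> N\<close>, of "snd v" "snd p" "TA - fst v"]
          x that unfolding visit_def by (auto simp: case_prod_beta)
    qed (use \<open>x \<noteq> []\<close> in \<open>auto simp: case_prod_beta\<close>)
  qed
  have "\<bar>sigmoid (\<Sum>p\<in>?I. W (fst p) (snd p) * sigmoid (score p))
          - sigmoid (\<Sum>p\<in>?I. W (fst p) (snd p) * (if P p then 1 else 0))\<bar>
        \<le> (\<Sum>p\<in>?I. \<bar>W (fst p) (snd p)\<bar>) * sigmoid (- N)"
    using assms(1) sep by (intro sigmoid_weighted_sum_approx) auto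
  then show ?thesis
    unfolding sard_eq windowed_eq sum.cartesian_product by (simp add: case_prod_beta)
qed

text \<open>The construction works uniformly in the number of visits, layers and heads.\<close>
theorem lemma1:
  fixes Cs :: "'c set" and nv R :: nat and TA :: int
    and ws :: "nat option list" and W :: "nat \<Rightarrow> 'c \<Rightarrow> real"
    and \<epsilon> :: real and L H :: nat
  assumes "finite Cs" and "nv \<ge> 1" and "R > 0"
    and "\<forall>w\<in>set ws. (case w of None \<Rightarrow> True | Some wl \<Rightarrow> wl < R)"
    and "\<epsilon> > 0" and "L \<ge> 1" and "H \<ge> 1"
  shows "\<exists>de dk dv K \<omega> (\<phi> :: 'c \<Rightarrow> vec) layers \<kappa> u.
           even de \<and> length layers = L \<and> (\<forall>lay\<in>set layers. length (fst lay) = H) \<and>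
           (\<forall>x :: 'c history. 1 \<le> length x \<and> length x \<le> nv \<and>
               (\<forall>(t, C)\<in>set x. t \<le> TA \<and> C \<subseteq> Cs) \<longrightarrow>
               \<bar>sard R TA de dk dv \<omega> \<phi> layers K \<kappa> u x - windowed Cs TA ws W x\<bar> < \<epsilon>)"
proof -
  let ?I = "{..<length ws} \<times> Cs"
  obtain idx where idx: "bij_betw idx Cs {0..<card Cs}"
    using ex_bij_betw_finite_nat[OF assms(1)] by blast
  obtain kk where kk: "bij_betw kk {..<card ?I} ?I"
    using ex_bij_betw_nat_finite[of ?I] assms(1) by (auto simp: lessThan_atLeast0)
  have "0 \<le> (\<Sum>l<length ws. \<Sum>c\<in>Cs. \<bar>W l c\<bar>)"
    by (intro sum_nonneg) auto
  then obtain N where "0 \<le> N" and N: "(\<Sum>l<length ws. \<Sum>c\<in>Cs. \<bar>W l c\<bar>) * sigmoid (- N) < \<epsilon>"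
    using ex_sigmoid_neg_small[OF _ assms(5)] by blast
  define layers :: "layer list" where
    "layers = replicate L (replicate H (zero_aff, zero_aff, zero_aff), zero_aff)"
  have layers: "length layers = L" "\<forall>lay\<in>set layers. length (fst lay) = H"
    "\<forall>lay\<in>set layers. snd lay = zero_aff"
    unfolding layers_def by auto
  have idx_inj: "inj_on idx Cs" and idx_less: "\<forall>c\<in>Cs. idx c < card Cs"
    using idx by (auto simp: bij_betw_def)
  have "\<bar>sard R TA (2 * (card Cs + 2)) 1 1 (clock_freq R) (code_vec idx) layers (card ?I)
          (\<lambda>k. window_kernel idx (card Cs) N R (ws ! fst (kk k)) (snd (kk k)))
          (\<lambda>k. W (fst (kk k)) (snd (kk k))) x - windowed Cs TA ws W x\<bar> < \<epsilon>"
    if "1 \<le> length x" "\<forall>(t, C)\<in>set x. t \<le> TA \<and> C \<subseteq> Cs" for x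
  proof -
    have "x \<noteq> []"
      using that(1) by auto
    from sard_window_model_error[where W = W and dk = 1 and dv = 1, OF assms(1) idx_inj idx_less
        kk assms(4) \<open>0 \<le> N\<close> layers(3) this that(2)]
    show ?thesis
      using N by linarith
  qed
  moreover have "even (2 * (card Cs + 2))"
    by simp
  ultimately show ?thesis
    using layers(1,2) by blast
qed

end
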